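(* In the inexact augmented Lagrangian method described in the context, for every $t\ge1$, writing $\bar d(\lambda_t):=\mathcal{L}^\beta(x_{t+1},\lambda_t)$ and $g_t:=Ax_{t+1}-b$: (a) $d(\lambda)\le\bar d(\lambda_t)+\langle g_t,\lambda-\lambda_t\rangle$ for all $\lambda\in\mathbb{R}^m$; (b) $d(\lambda_{t+1})\ge\bar d(\lambda_t)+\frac{\beta}{4}\|g_t\|^2-2\epsilon_t$.
   Context: Problem: $\min_{x\in\mathcal{X}}f(x)$ s.t. $Ax=b$, with $f:\mathbb{R}^n\to\mathbb{R}$ convex and differentiable, $\mathcal{X}\subseteq\mathbb{R}^n$ nonempty, closed, bounded and convex, $A\in\mathbb{R}^{m\times n}$, $b\in\mathbb{R}^m$. Augmented Lagrangian $\mathcal{L}^\beta(x,\lambda)=f(x)+\langle\lambda,Ax-b\rangle+\frac{\beta}{2}\|Ax-b\|^2$, $\beta>0$; dual function $d(\lambda)=\min_{x\in\mathcal{X}}\mathcal{L}^\beta(x,\lambda)$; Euclidean norms. Method: given $x_1\in\mathcal{X}$, $\lambda_1$, nonnegative $(\epsilon_t)$, for $t\ge1$ choose $x_{t+1}\in\mathcal{X}$ with $\mathcal{L}^\beta(x_{t+1},\lambda_t)-d(\lambda_t)\le\epsilon_t$ and set $\lambda_{t+1}=\lambda_t+\frac{\beta}{2}(Ax_{t+1}-b)$. *)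

theory Defs
  imports "HOL-Analysis.Analysis"
begin

definition aug_lagr ::
  "(real^'n \<Rightarrow> real) \<Rightarrow> real^'n^'m \<Rightarrow> real^'m \<Rightarrow> real \<Rightarrow> real^'n \<Rightarrow> real^'m \<Rightarrow> real" where
  "aug_lagr f A b \<beta> x l =
     f x + inner l (A *v x - b) + \<beta> / 2 * (norm (A *v x - b))\<^sup>2"

text \<open>Dual function d(lambda) = min over x in X of L^beta(x,lambda)
  (the minimum is attained since X is compact and L^beta is continuous).\<close>
definition dual_fun ::
  "(real^'n \<Rightarrow> real) \<Rightarrow> real^'n^'m \<Rightarrow> real^'m \<Rightarrow> real \<Rightarrow> (real^'n) set \<Rightarrow> real^'m \<Rightarrow> real" where
  "dual_fun f A b \<beta> X l = (INF x\<in>X. aug_lagr f A b \<beta> x l)"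

end

theory Submission
  imports Defs
begin

text \<open>The augmented Lagrangian is affine in the multiplier with slope \<open>A x - b\<close>, so bounding
  the dual function by its value at \<open>x\<^sub>t\<^sub>+\<^sub>1 \<in> X\<close> gives (a). For (b), compare with the midpoint
  \<open>z\<close> of \<open>x\<^sub>t\<^sub>+\<^sub>1\<close> and an arbitrary \<open>y \<in> X\<close>: convexity of \<open>f\<close> and expanding the quadratic
  penalty give \<open>2 L(z, \<lambda>\<^sub>t) \<le> L(y, \<lambda>\<^sub>t\<^sub>+\<^sub>1) + L(x\<^sub>t\<^sub>+\<^sub>1, \<lambda>\<^sub>t) - \<beta>/4 \<parallel>g\<^sub>t\<parallel>\<^sup>2\<close>, while inexactness
  gives \<open>L(x\<^sub>t\<^sub>+\<^sub>1, \<lambda>\<^sub>t) - \<epsilon>\<^sub>t \<le> d(\<lambda>\<^sub>t) \<le> L(z, \<lambda>\<^sub>t)\<close>.\<close>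

lemma aug_lagr_shift_multiplier:
  "aug_lagr f A b \<beta> x \<mu> = aug_lagr f A b \<beta> x l + inner (A *v x - b) (\<mu> - l)"
  unfolding aug_lagr_def by (simp add: algebra_simps inner_commute)

lemma aug_lagr_midpoint_le:
  fixes f :: "real^'n \<Rightarrow> real" and A :: "real^'n^'m"
  assumes f_convex: "convex_on S f" and "x \<in> S" "y \<in> S" and beta_nonneg: "\<beta> \<ge> 0"
  shows "2 * aug_lagr f A b \<beta> (midpoint y x) l
    \<le> aug_lagr f A b \<beta> y (l + (\<beta> / 2) *\<^sub>R (A *v x - b)) + aug_lagr f A b \<beta> x l
      - \<beta> / 4 * (norm (A *v x - b))\<^sup>2"
proof -
  define g where "g = A *v x - b"
  define h where "h = A *v y - b"
  have f_mid: "2 * f (midpoint y x) \<le> f y + f x"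
    using convex_onD[OF f_convex, of "1/2" y x] \<open>x \<in> S\<close> \<open>y \<in> S\<close>
    by (simp add: midpoint_def scaleR_right_distrib)
  have "b = (1/2) *\<^sub>R (b + b)"
    by (simp add: scaleR_right_distrib flip: scaleR_add_left)
  then have residual_mid: "A *v midpoint y x - b = (1/2) *\<^sub>R (h + g)"
    unfolding g_def h_def midpoint_def
    by (simp add: matrix_vector_right_distrib matrix_vector_mult_scaleR algebra_simps)
  have "0 \<le> \<beta> * inner h h"
    using beta_nonneg by simp
  with f_mid show ?thesis
    unfolding aug_lagr_def g_def[symmetric] h_def[symmetric] residual_mid power2_norm_eq_inner
    by (simp add: algebra_simps inner_commute)
qed

lemma dual_fun_le_aug_lagr:
  fixes f :: "real^'n \<Rightarrow> real" and A :: "real^'n^'m"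
  assumes f_cont: "continuous_on X f" and X_compact: "compact X" and x: "x \<in> X"
  shows "dual_fun f A b \<beta> X l \<le> aug_lagr f A b \<beta> x l"
proof -
  have "continuous_on X (\<lambda>x. aug_lagr f A b \<beta> x l)"
    unfolding aug_lagr_def by (intro continuous_intros f_cont)
  then have "bdd_below ((\<lambda>x. aug_lagr f A b \<beta> x l) ` X)"
    using X_compact by (simp add: compact_continuous_image bounded_imp_bdd_below compact_imp_bounded)
  then show ?thesis
    unfolding dual_fun_def using x by (rule cINF_lower)
qed

lemma dual_fun_supergradient:
  fixes f :: "real^'n \<Rightarrow> real" and A :: "real^'n^'m"
  assumes "continuous_on X f" and "compact X" and "x \<in> X"
  shows "dual_fun f A b \<beta> X \<mu> \<le> aug_lagr f A b \<beta> x l + inner (A *v x - b) (\<mu> - l)"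
  using dual_fun_le_aug_lagr[OF assms, of A b \<beta> \<mu>] aug_lagr_shift_multiplier[of f A b \<beta> x \<mu> l]
  by simp

lemma dual_fun_ascent:
  fixes f :: "real^'n \<Rightarrow> real" and A :: "real^'n^'m"
  assumes f_convex: "convex_on X f" and f_cont: "continuous_on X f"
    and X_ne: "X \<noteq> {}" and X_compact: "compact X"
    and beta_nonneg: "\<beta> \<ge> 0" and x: "x \<in> X"
    and x_inexact: "aug_lagr f A b \<beta> x l - dual_fun f A b \<beta> X l \<le> \<epsilon>"
  shows "aug_lagr f A b \<beta> x l + \<beta> / 4 * (norm (A *v x - b))\<^sup>2 - 2 * \<epsilon>
    \<le> dual_fun f A b \<beta> X (l + (\<beta> / 2) *\<^sub>R (A *v x - b))"
  unfolding dual_fun_def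
proof (rule cINF_greatest[OF X_ne])
  fix y assume y: "y \<in> X"
  have "midpoint y x \<in> X"
    using convexD[OF convex_on_imp_convex[OF f_convex] y x, of "1/2" "1/2"]
    by (simp add: midpoint_def scaleR_right_distrib)
  then have "aug_lagr f A b \<beta> x l - \<epsilon> \<le> aug_lagr f A b \<beta> (midpoint y x) l"
    using dual_fun_le_aug_lagr[OF f_cont X_compact, of "midpoint y x" A b \<beta> l] x_inexact
    by linarith
  with aug_lagr_midpoint_le[OF f_convex x y beta_nonneg, of A b l]
  show "aug_lagr f A b \<beta> x l + \<beta> / 4 * (norm (A *v x - b))\<^sup>2 - 2 * \<epsilon>
    \<le> aug_lagr f A b \<beta> y (l + (\<beta> / 2) *\<^sub>R (A *v x - b))"
    by linarith
qed

theorem lemma9: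
  fixes f :: "real^'n \<Rightarrow> real"
    and X :: "(real^'n) set"
    and A :: "real^'n^'m"
    and b :: "real^'m"
    and \<beta> :: real
    and x :: "nat \<Rightarrow> real^'n"
    and lam :: "nat \<Rightarrow> real^'m"
    and \<epsilon> :: "nat \<Rightarrow> real"
    and t :: nat
  assumes f_convex: "convex_on UNIV f"
    and f_diff: "\<And>z. f differentiable (at z)"
    and X_ne: "X \<noteq> {}" and X_closed: "closed X" and X_bdd: "bounded X" and X_convex: "convex X"
    and beta_pos: "\<beta> > 0"
    and eps_nonneg: "\<And>s. s \<ge> 1 \<Longrightarrow> \<epsilon> s \<ge> 0"
    and x1: "x 1 \<in> X"
    and x_in: "\<And>s. s \<ge> 1 \<Longrightarrow> x (s + 1) \<in> X"
    and x_inexact: "\<And>s. s \<ge> 1 \<Longrightarrow>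
          aug_lagr f A b \<beta> (x (s + 1)) (lam s) - dual_fun f A b \<beta> X (lam s) \<le> \<epsilon> s"
    and lam_upd: "\<And>s. s \<ge> 1 \<Longrightarrow> lam (s + 1) = lam s + (\<beta> / 2) *\<^sub>R (A *v x (s + 1) - b)"
    and t_ge: "t \<ge> 1"
  shows "(\<forall>\<mu>. dual_fun f A b \<beta> X \<mu> \<le>
            aug_lagr f A b \<beta> (x (t + 1)) (lam t) + inner (A *v x (t + 1) - b) (\<mu> - lam t))
       \<and> dual_fun f A b \<beta> X (lam (t + 1)) \<ge>
            aug_lagr f A b \<beta> (x (t + 1)) (lam t) + \<beta> / 4 * (norm (A *v x (t + 1) - b))\<^sup>2 - 2 * \<epsilon> t"
proof -
  have X_compact: "compact X"
    using X_closed X_bdd by (simp add: compact_eq_bounded_closed)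
  have f_cont: "continuous_on X f"
    using f_diff by (meson continuous_at_imp_continuous_on differentiable_imp_continuous_within)
  have f_convex_X: "convex_on X f"
    using convex_on_subset[OF f_convex _ X_convex] by simp
  have x_next: "x (t + 1) \<in> X"
    using x_in t_ge by simp
  show ?thesis
    unfolding lam_upd[OF t_ge]
    using beta_pos
    by (intro conjI allI dual_fun_supergradient[OF f_cont X_compact x_next]
        dual_fun_ascent[OF f_convex_X f_cont X_ne X_compact _ x_next x_inexact[OF t_ge]])
      simp
qed

end
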